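(* Let $V$ be a locally convex topological real vector space and $C$ a cone in $V$. Assume $X$ and $Y$ are nonempty decomposably $C$-antichain-convex subsets of $V$, $X$ is closed, $\operatorname{co}(Y)$ is compact and $X\cap Y=\emptyset$. (1) If $X$ is $C$-upward, then $X$ and $Y$ are strictly separated. (2) If $X$ is $C$-downward, then $X$ and $Y$ are strictly separated.
   Context: A cone in $V$ is a subset $C$ with $\lambda C\subseteq C$ for all $\lambda>0$ (possibly empty, need not contain $0$). $S\subseteq V$ is $C$-antichain-convex iff for all $x,y\in S$ and $\lambda\in[0,1]$ with $y-x\notin C\cup(-C)$ one has $\lambda x+(1-\lambda)y\in S$; $S$ is decomposably $C$-antichain-convex iff $S$ is a Minkowski sum of finitely many $C$-antichain-convex subsets of $V$. $S$ is $C$-upward iff $S+C\subseteq S$; $C$-downward iff $S-C\subseteq S$. $X$ and $Y$ are strictly separated iff there is a continuous linear functional $f$ on $V$ with $\sup f[X]<\inf f[Y]$. *)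

theory Defs
  imports "HOL-Analysis.Analysis"
begin

text \<open>Locally convex topological real vector space (not necessarily Hausdorff):
  addition and scalar multiplication are jointly continuous (stated via the
  product filter of neighbourhood filters, i.e. continuity w.r.t. the product topology), and 0 has a
  neighbourhood base of convex open sets (convexity written out as in
  convex_def, since the global constant cannot be used inside the class specification) (hence, by translation, every point has).\<close>
class locally_convex_tvs = real_vector + topological_space +
  assumes continuous_add_lctvs: "\<And>x y :: 'a. ((\<lambda>p. fst p + snd p) \<longlongrightarrow> x + y) (nhds x \<times>\<^sub>F nhds y)"
  and continuous_scale_lctvs: "\<And>(c::real) (x::'a). ((\<lambda>p. fst p *\<^sub>R snd p) \<longlongrightarrow> c *\<^sub>R x) (nhds c \<times>\<^sub>F nhds x)"
  and locally_convex_lctvs: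
    "\<And>U::'a set. open U \<Longrightarrow> 0 \<in> U \<Longrightarrow> \<exists>W. open W \<and> 0 \<in> W \<and> W \<subseteq> U \<and>
       (\<forall>x\<in>W. \<forall>y\<in>W. \<forall>u::real. \<forall>v. 0 \<le> u \<longrightarrow> 0 \<le> v \<longrightarrow> u + v = 1 \<longrightarrow> u *\<^sub>R x + v *\<^sub>R y \<in> W)"

definition is_cone :: "'a::real_vector set \<Rightarrow> bool" where
  "is_cone C \<longleftrightarrow> (\<forall>l::real. l > 0 \<longrightarrow> (\<lambda>x. l *\<^sub>R x) ` C \<subseteq> C)"

definition antichain_convex :: "'a::real_vector set \<Rightarrow> 'a set \<Rightarrow> bool" where
  "antichain_convex C S \<longleftrightarrow>
     (\<forall>x\<in>S. \<forall>y\<in>S. \<forall>l::real. 0 \<le> l \<and> l \<le> 1 \<and> y - x \<notin> C \<union> uminus ` C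
        \<longrightarrow> l *\<^sub>R x + (1 - l) *\<^sub>R y \<in> S)"

definition minkowski_sum :: "'a::real_vector set \<Rightarrow> 'a set \<Rightarrow> 'a set" where
  "minkowski_sum A B = {a + b | a b. a \<in> A \<and> b \<in> B}"

definition minkowski_sum_list :: "'a::real_vector set list \<Rightarrow> 'a set" where
  "minkowski_sum_list Ss = foldr minkowski_sum Ss {0}"

definition decomp_antichain_convex :: "'a::real_vector set \<Rightarrow> 'a set \<Rightarrow> bool" where
  "decomp_antichain_convex C S \<longleftrightarrow>
     (\<exists>Ss. (\<forall>T\<in>set Ss. antichain_convex C T) \<and> S = minkowski_sum_list Ss)"

definition upward :: "'a::real_vector set \<Rightarrow> 'a set \<Rightarrow> bool" where
  "upward C S \<longleftrightarrow> minkowski_sum S C \<subseteq> S"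

definition downward :: "'a::real_vector set \<Rightarrow> 'a set \<Rightarrow> bool" where
  "downward C S \<longleftrightarrow> minkowski_sum S (uminus ` C) \<subseteq> S"

definition strictly_separated :: "'a::{real_vector,topological_space} set \<Rightarrow> 'a set \<Rightarrow> bool" where
  "strictly_separated X Y \<longleftrightarrow>
     (\<exists>f::'a \<Rightarrow> real. linear f \<and> continuous_on UNIV f \<and>
        (SUP x\<in>X. ereal (f x)) < (INF y\<in>Y. ereal (f y)))"

end

theory Submission
  imports Defs
begin

text \<open>Write \<open>\<Sigma>C\<close> for the set of finite sums of elements of \<open>C\<close>. If \<open>S = T\<^sub>1 + \<dots> + T\<^sub>n\<close>
  with antichain-convex summands, then a convex combination of two points of \<open>S\<close> lies in
  \<open>S + \<Sigma>C\<close>: summand by summand, two points are either comparable, so that the combination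
  is one of them moved along \<open>C\<close>, or incomparable, so that antichain-convexity keeps the
  combination in \<open>T\<^sub>i\<close>. Hence \<open>S + \<Sigma>C\<close> is convex. An upward set \<open>X\<close> satisfies
  \<open>X = X + \<Sigma>C\<close> and is therefore convex, and \<open>co Y \<subseteq> Y - \<Sigma>C\<close> remains disjoint from \<open>X\<close>.
  The closed convex set \<open>X\<close> and the compact convex set \<open>co Y\<close> are then strictly separated
  by the usual locally convex argument (Minkowski functional of an open convex neighbourhood
  plus Hahn-Banach). The downward case is the upward case for the cone \<open>-C\<close>.\<close>

section \<open>Sublinear functionals and the Hahn-Banach theorem\<close>

definition sublinear :: "('a::real_vector \<Rightarrow> real) \<Rightarrow> bool" where
  "sublinear p \<longleftrightarrow>
     (\<forall>x y. p (x + y) \<le> p x + p y) \<and> (\<forall>c x. c \<ge> 0 \<longrightarrow> p (c *\<^sub>R x) = c * p x)"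

lemma sublinear_add_le: "sublinear p \<Longrightarrow> p (x + y) \<le> p x + p y"
  unfolding sublinear_def by blast

lemma sublinear_scaleR: "sublinear p \<Longrightarrow> c \<ge> 0 \<Longrightarrow> p (c *\<^sub>R x) = c * p x"
  unfolding sublinear_def by blast

lemma sublinear_zero: "sublinear p \<Longrightarrow> p 0 = 0"
  using sublinear_scaleR[of p 0 0] by simp

lemma sublinear_minus_le: "sublinear p \<Longrightarrow> - p (- x) \<le> p x"
  using sublinear_add_le[of p x "- x"] sublinear_zero[of p] by simp

lemma sublinearI:
  fixes p :: "'a::real_vector \<Rightarrow> real"
  assumes add: "\<And>x y. p (x + y) \<le> p x + p y"
    and scale: "\<And>c x. c > 0 \<Longrightarrow> p (c *\<^sub>R x) \<le> c * p x"
    and zero: "p 0 = 0"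
  shows "sublinear p"
  unfolding sublinear_def
proof (intro conjI allI impI add)
  fix c :: real and x :: 'a assume "c \<ge> 0"
  show "p (c *\<^sub>R x) = c * p x"
  proof (cases "c = 0")
    case True then show ?thesis using zero by simp
  next
    case False
    with \<open>c \<ge> 0\<close> have c: "c > 0" by simp
    have "p x = p ((1 / c) *\<^sub>R (c *\<^sub>R x))" using c by simp
    also have "\<dots> \<le> (1 / c) * p (c *\<^sub>R x)" using scale[of "1 / c" "c *\<^sub>R x"] c by simp
    finally have "c * p x \<le> p (c *\<^sub>R x)" using c by (simp add: field_simps)
    with scale[OF c, of x] show ?thesis by simp
  qed
qed

lemma sublinear_linear:
  assumes p: "sublinear p" and odd: "\<And>y. p (- y) \<le> - p y"
  shows "linear p"
proof -
  have minus: "p (- y) = - p y" for y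
    using odd[of y] sublinear_minus_le[OF p, of y] by simp
  show ?thesis
  proof (rule linearI)
    fix a b
    show "p (a + b) = p a + p b"
      using sublinear_add_le[OF p, of a b] sublinear_add_le[OF p, of "- a" "- b"] minus[of "a + b"]
        minus[of a] minus[of b] by simp
  next
    fix r :: real and b
    show "p (r *\<^sub>R b) = r *\<^sub>R p b"
    proof (cases "r \<ge> 0")
      case True then show ?thesis using sublinear_scaleR[OF p] by simp
    next
      case False
      then have "p (r *\<^sub>R b) = - p ((- r) *\<^sub>R b)" using minus[of "(- r) *\<^sub>R b"] by simp
      also have "\<dots> = r * p b" using sublinear_scaleR[OF p, of "- r" b] False by simp
      finally show ?thesis by simp
    qed
  qed
qed

lemma le_cINF_add:
  fixes A B :: "'b \<Rightarrow> real"
  assumes "S \<noteq> {}" "T \<noteq> {}" "bdd_below (A ` S)" "bdd_below (B ` T)"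
    and "\<And>s t. s \<in> S \<Longrightarrow> t \<in> T \<Longrightarrow> a \<le> A s + B t"
  shows "a \<le> (INF s\<in>S. A s) + (INF t\<in>T. B t)"
proof -
  have "a - (INF s\<in>S. A s) \<le> B t" if "t \<in> T" for t
  proof -
    have "a - B t \<le> (INF s\<in>S. A s)"
      by (rule cINF_greatest) (use assms that in force)+
    then show ?thesis by simp
  qed
  then have "a - (INF s\<in>S. A s) \<le> (INF t\<in>T. B t)"
    by (intro cINF_greatest) (use assms in auto)
  then show ?thesis by simp
qed

text \<open>Any linear functional below \<open>sublinear_shift p y\<close> is below \<open>p\<close> and takes the value
  \<open>p y\<close> at \<open>y\<close>, because \<open>sublinear_shift p y (- y) \<le> - p y\<close>.\<close>
definition sublinear_shift :: "('a::real_vector \<Rightarrow> real) \<Rightarrow> 'a \<Rightarrow> 'a \<Rightarrow> real" where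
  "sublinear_shift p y x = (INF t\<in>{0..}. p (x + t *\<^sub>R y) - t * p y)"

lemma bdd_below_sublinear_shift:
  assumes "sublinear p"
  shows "bdd_below ((\<lambda>t. p (x + t *\<^sub>R y) - t * p y) ` {0..})"
proof (rule bdd_belowI2)
  fix t :: real assume "t \<in> {0..}"
  have "t * p y = p ((x + t *\<^sub>R y) + (- x))"
    using sublinear_scaleR[OF assms, of t y] \<open>t \<in> {0..}\<close> by simp
  also have "\<dots> \<le> p (x + t *\<^sub>R y) + p (- x)" by (rule sublinear_add_le[OF assms])
  finally show "- p (- x) \<le> p (x + t *\<^sub>R y) - t * p y" by simp
qed

lemma sublinear_shift_le:
  assumes "sublinear p" "t \<ge> 0"
  shows "sublinear_shift p y x \<le> p (x + t *\<^sub>R y) - t * p y"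
  unfolding sublinear_shift_def
  by (rule cINF_lower) (use bdd_below_sublinear_shift[OF assms(1)] assms(2) in auto)

lemma sublinear_shift_le_self: "sublinear p \<Longrightarrow> sublinear_shift p y x \<le> p x"
  using sublinear_shift_le[of p 0 y x] by simp

lemma sublinear_shift_minus: "sublinear p \<Longrightarrow> sublinear_shift p y (- y) \<le> - p y"
  using sublinear_shift_le[of p 1 y "- y"] sublinear_zero[of p] by simp

lemma sublinear_sublinear_shift:
  assumes p: "sublinear p"
  shows "sublinear (sublinear_shift p y)"
proof (rule sublinearI)
  fix x1 x2
  show "sublinear_shift p y (x1 + x2) \<le> sublinear_shift p y x1 + sublinear_shift p y x2"
    unfolding sublinear_shift_def[of p y x1] sublinear_shift_def[of p y x2]
  proof (rule le_cINF_add)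
    fix s t :: real assume "s \<in> {0..}" "t \<in> {0..}"
    then have "sublinear_shift p y (x1 + x2) \<le> p ((x1 + x2) + (s + t) *\<^sub>R y) - (s + t) * p y"
      by (intro sublinear_shift_le[OF p]) auto
    also have "(x1 + x2) + (s + t) *\<^sub>R y = (x1 + s *\<^sub>R y) + (x2 + t *\<^sub>R y)"
      by (simp add: algebra_simps)
    also have "p \<dots> - (s + t) * p y \<le> (p (x1 + s *\<^sub>R y) - s * p y) + (p (x2 + t *\<^sub>R y) - t * p y)"
      using sublinear_add_le[OF p, of "x1 + s *\<^sub>R y" "x2 + t *\<^sub>R y"] by (simp add: algebra_simps)
    finally show "sublinear_shift p y (x1 + x2) \<le> \<dots>" .
  qed (use bdd_below_sublinear_shift[OF p] in auto)
next
  fix c :: real and x assume c: "c > 0"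
  have "sublinear_shift p y (c *\<^sub>R x) / c \<le> sublinear_shift p y x"
    unfolding sublinear_shift_def[of p y x]
  proof (rule cINF_greatest)
    fix t :: real assume "t \<in> {0..}"
    then have "sublinear_shift p y (c *\<^sub>R x) \<le> p (c *\<^sub>R (x + t *\<^sub>R y)) - (c * t) * p y"
      using sublinear_shift_le[OF p, of "c * t" y "c *\<^sub>R x"] c by (simp add: algebra_simps)
    also have "\<dots> = c * (p (x + t *\<^sub>R y) - t * p y)"
      using sublinear_scaleR[OF p, of c "x + t *\<^sub>R y"] c by (simp add: algebra_simps)
    finally show "sublinear_shift p y (c *\<^sub>R x) / c \<le> p (x + t *\<^sub>R y) - t * p y"
      using c by (simp add: field_simps)
  qed simp
  then show "sublinear_shift p y (c *\<^sub>R x) \<le> c * sublinear_shift p y x"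
    using c by (simp add: field_simps)
next
  have "sublinear_shift p y 0 = (INF t\<in>{0::real..}. 0)"
    unfolding sublinear_shift_def using sublinear_scaleR[OF p] by (intro INF_cong) auto
  then show "sublinear_shift p y 0 = 0" by simp
qed

lemma sublinear_minimal_imp_linear:
  assumes q: "sublinear q" and minimal: "\<And>q'. sublinear q' \<Longrightarrow> q' \<le> q \<Longrightarrow> q' = q"
  shows "linear q"
proof (rule sublinear_linear[OF q])
  fix y
  have "sublinear_shift q y = q"
    using minimal sublinear_sublinear_shift[OF q] sublinear_shift_le_self[OF q] by (simp add: le_fun_def)
  then show "q (- y) \<le> - q y" using sublinear_shift_minus[OF q, of y] by simp
qed

lemma
  assumes "F \<noteq> {}" and F: "\<And>q. q \<in> F \<Longrightarrow> sublinear q \<and> q \<le> p"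
    and chain: "\<And>q1 q2. q1 \<in> F \<Longrightarrow> q2 \<in> F \<Longrightarrow> q1 \<le> q2 \<or> q2 \<le> q1"
  shows sublinear_INF_chain: "sublinear (\<lambda>x. INF q\<in>F. q x)"
    and INF_chain_le: "q \<in> F \<Longrightarrow> (\<lambda>x. INF q\<in>F. q x) \<le> q"
proof -
  have bdd: "bdd_below ((\<lambda>q. q x) ` F)" for x
  proof (rule bdd_belowI2)
    fix q assume "q \<in> F"
    then have "q (- x) \<le> p (- x)" using F by (simp add: le_fun_def)
    with \<open>q \<in> F\<close> show "- p (- x) \<le> q x" using F sublinear_minus_le[of q x] by force
  qed
  show lower: "(\<lambda>x. INF q\<in>F. q x) \<le> q" if "q \<in> F" for q
    using bdd that by (auto simp: le_fun_def intro: cINF_lower)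
  show "sublinear (\<lambda>x. INF q\<in>F. q x)"
  proof (rule sublinearI)
    fix x y
    show "(INF q\<in>F. q (x + y)) \<le> (INF q\<in>F. q x) + (INF q\<in>F. q y)"
    proof (rule le_cINF_add)
      fix q1 q2 assume "q1 \<in> F" "q2 \<in> F"
      then obtain q where "q \<in> F" "q \<le> q1" "q \<le> q2" using chain by blast
      then have "(INF q\<in>F. q (x + y)) \<le> q x + q y"
        using lower F sublinear_add_le by (force simp: le_fun_def intro: order_trans)
      also have "\<dots> \<le> q1 x + q2 y" using \<open>q \<le> q1\<close> \<open>q \<le> q2\<close> by (simp add: add_mono le_fun_def)
      finally show "(INF q\<in>F. q (x + y)) \<le> q1 x + q2 y" .
    qed (use \<open>F \<noteq> {}\<close> bdd in auto)
  next
    fix c :: real and x assume c: "c > 0"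
    have "(INF q\<in>F. q (c *\<^sub>R x)) / c \<le> (INF q\<in>F. q x)"
    proof (rule cINF_greatest[OF \<open>F \<noteq> {}\<close>])
      fix q assume "q \<in> F"
      then have "(INF q\<in>F. q (c *\<^sub>R x)) \<le> q (c *\<^sub>R x)"
        using lower[of q] by (simp add: le_fun_def)
      also have "\<dots> = c * q x" using F[OF \<open>q \<in> F\<close>] c by (simp add: sublinear_scaleR)
      finally have "(INF q\<in>F. q (c *\<^sub>R x)) \<le> c * q x" .
      then show "(INF q\<in>F. q (c *\<^sub>R x)) / c \<le> q x" using c by (simp add: field_simps)
    qed
    then show "(INF q\<in>F. q (c *\<^sub>R x)) \<le> c * (INF q\<in>F. q x)" using c by (simp add: field_simps)
  next
    have "(INF q\<in>F. q 0) = (INF q\<in>F. 0::real)"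
      using F by (intro INF_cong) (auto simp: sublinear_zero)
    then show "(INF q\<in>F. q 0) = 0" using \<open>F \<noteq> {}\<close> by simp
  qed
qed

lemma exists_linear_le_sublinear:
  assumes "sublinear p"
  shows "\<exists>f. linear f \<and> f \<le> p"
proof -
  define A where "A = {q. sublinear q \<and> q \<le> p}"
  have "partial_order_on A (relation_of (\<ge>) A)"
    by (rule partial_order_on_relation_ofI) (simp_all add: order_antisym)
  moreover have "\<exists>m\<in>A. \<forall>q\<in>F. q \<ge> m" if "F \<in> Chains (relation_of (\<ge>) A)" for F
  proof (cases "F = {}")
    case True
    have "p \<in> A" using assms unfolding A_def by simp
    with True show ?thesis by blast
  next
    case False
    have FA: "\<And>q. q \<in> F \<Longrightarrow> sublinear q \<and> q \<le> p"
      and chain: "\<And>q1 q2. q1 \<in> F \<Longrightarrow> q2 \<in> F \<Longrightarrow> q1 \<le> q2 \<or> q2 \<le> q1"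
      using that unfolding Chains_def relation_of_def A_def by auto
    define m where "m = (\<lambda>x. INF q\<in>F. q x)"
    have "sublinear m" unfolding m_def by (rule sublinear_INF_chain[OF False FA chain])
    have lower: "\<forall>q\<in>F. q \<ge> m" unfolding m_def using INF_chain_le[OF False FA chain] by blast
    obtain q where "q \<in> F" using False by blast
    then have "m \<le> p" using order_trans[of m q p] lower FA[of q] by blast
    with \<open>sublinear m\<close> lower show ?thesis unfolding A_def by blast
  qed
  ultimately obtain q where "q \<in> A" and minimal: "\<forall>q'\<in>A. q' \<le> q \<longrightarrow> q' = q"
    using predicate_Zorn[of A "(\<ge>)"] by blast
  have "linear q"
  proof (rule sublinear_minimal_imp_linear)
    show "sublinear q" using \<open>q \<in> A\<close> unfolding A_def by blast
    show "q' = q" if "sublinear q'" "q' \<le> q" for q'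
    proof -
      have "q' \<le> p" using order_trans[of q' q p] that(2) \<open>q \<in> A\<close> unfolding A_def by blast
      then show ?thesis using minimal that unfolding A_def by blast
    qed
  qed
  then show ?thesis using \<open>q \<in> A\<close> unfolding A_def by blast
qed

theorem Hahn_Banach_sublinear:
  assumes p: "sublinear p"
  shows "\<exists>f. linear f \<and> f \<le> p \<and> f y = p y"
proof -
  obtain f where f: "linear f" "f \<le> sublinear_shift p y"
    using exists_linear_le_sublinear[OF sublinear_sublinear_shift[OF p]] by blast
  have "f \<le> p" using f(2) sublinear_shift_le_self[OF p] by (meson le_fun_def order_trans)
  moreover have "- f y \<le> - p y"
    using le_funD[OF f(2), of "- y"] sublinear_shift_minus[OF p, of y] linear_neg[OF f(1), of y] by simp
  ultimately show ?thesis using f(1) le_funD[of f p y] by (intro exI[of _ f]) simp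
qed

section \<open>The Minkowski functional\<close>

definition minkowski_functional :: "'a::real_vector set \<Rightarrow> 'a \<Rightarrow> real" where
  "minkowski_functional U z = Inf {t. 0 < t \<and> (1 / t) *\<^sub>R z \<in> U}"

lemma bdd_below_minkowski_functional_set: "bdd_below {t. 0 < t \<and> (1 / t) *\<^sub>R z \<in> U}"
  by (rule bdd_belowI[of _ 0]) simp

lemma minkowski_functional_le:
  "0 < t \<Longrightarrow> (1 / t) *\<^sub>R z \<in> U \<Longrightarrow> minkowski_functional U z \<le> t"
  unfolding minkowski_functional_def
  by (rule cInf_lower[OF _ bdd_below_minkowski_functional_set]) simp

lemma minkowski_functional_le_1: "u \<in> U \<Longrightarrow> minkowski_functional U u \<le> 1"
  using minkowski_functional_le[of 1 u U] by simp

context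
  fixes U :: "'a::real_vector set"
  assumes convex: "convex U" and zero: "0 \<in> U" and absorbing: "\<And>z. \<exists>e>0. e *\<^sub>R z \<in> U"
begin

lemma minkowski_functional_set_nonempty: "{t. 0 < t \<and> (1 / t) *\<^sub>R z \<in> U} \<noteq> {}"
proof -
  obtain e where "e > 0" "e *\<^sub>R z \<in> U" using absorbing by blast
  then have "1 / e \<in> {t. 0 < t \<and> (1 / t) *\<^sub>R z \<in> U}" by simp
  then show ?thesis by blast
qed

lemma minkowski_functional_ge_1:
  assumes "z \<notin> U"
  shows "1 \<le> minkowski_functional U z"
proof (rule ccontr)
  assume "\<not> 1 \<le> minkowski_functional U z"
  then have "Inf {t. 0 < t \<and> (1 / t) *\<^sub>R z \<in> U} < 1"
    unfolding minkowski_functional_def by simp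
  then obtain t where "0 < t" "t < 1" "(1 / t) *\<^sub>R z \<in> U"
    using cInf_lessD[OF minkowski_functional_set_nonempty] by blast
  then have "t *\<^sub>R ((1 / t) *\<^sub>R z) + (1 - t) *\<^sub>R 0 \<in> U"
    by (intro convexD[OF convex _ zero]) auto
  with \<open>0 < t\<close> \<open>z \<notin> U\<close> show False by simp
qed

lemma sublinear_minkowski_functional: "sublinear (minkowski_functional U)"
proof (rule sublinearI)
  fix x y
  show "minkowski_functional U (x + y) \<le> minkowski_functional U x + minkowski_functional U y"
    unfolding minkowski_functional_def[of U x] minkowski_functional_def[of U y]
  proof (rule le_cINF_add[where A = id and B = id, simplified])
    fix s t assume "s \<in> {t. 0 < t \<and> (1 / t) *\<^sub>R x \<in> U}" "t \<in> {t. 0 < t \<and> (1 / t) *\<^sub>R y \<in> U}"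
    then have st: "0 < s" "0 < t" "(1 / s) *\<^sub>R x \<in> U" "(1 / t) *\<^sub>R y \<in> U" by auto
    have "s / (s + t) + t / (s + t) = 1" using st by (simp flip: add_divide_distrib)
    then have "(s / (s + t)) *\<^sub>R ((1 / s) *\<^sub>R x) + (t / (s + t)) *\<^sub>R ((1 / t) *\<^sub>R y) \<in> U"
      using st by (intro convexD[OF convex]) simp_all
    also have "(s / (s + t)) *\<^sub>R ((1 / s) *\<^sub>R x) + (t / (s + t)) *\<^sub>R ((1 / t) *\<^sub>R y)
        = (1 / (s + t)) *\<^sub>R (x + y)"
      using st by (simp add: scaleR_add_right)
    finally show "minkowski_functional U (x + y) \<le> s + t"
      using st by (intro minkowski_functional_le) simp_all
  qed (simp_all only: minkowski_functional_set_nonempty bdd_below_minkowski_functional_set not_False_eq_True)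
next
  fix c :: real and x assume "c > 0"
  have "minkowski_functional U (c *\<^sub>R x) / c \<le> minkowski_functional U x"
    unfolding minkowski_functional_def[of U x]
  proof (rule cInf_greatest[OF minkowski_functional_set_nonempty])
    fix t assume "t \<in> {t. 0 < t \<and> (1 / t) *\<^sub>R x \<in> U}"
    then have "minkowski_functional U (c *\<^sub>R x) \<le> c * t"
      using \<open>c > 0\<close> by (intro minkowski_functional_le) auto
    then show "minkowski_functional U (c *\<^sub>R x) / c \<le> t"
      using \<open>c > 0\<close> by (simp add: field_simps)
  qed
  then show "minkowski_functional U (c *\<^sub>R x) \<le> c * minkowski_functional U x"
    using \<open>c > 0\<close> by (simp add: field_simps)
next
  have "{t. 0 < t \<and> (1 / t) *\<^sub>R 0 \<in> U} = {0<..}" using zero by auto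
  then show "minkowski_functional U 0 = 0" unfolding minkowski_functional_def by simp
qed

end

section \<open>Decomposably antichain-convex sets\<close>

lemma mem_minkowski_sum: "z \<in> minkowski_sum A B \<longleftrightarrow> (\<exists>a\<in>A. \<exists>b\<in>B. z = a + b)"
  unfolding minkowski_sum_def by blast

lemma minkowski_sum_list_Cons [simp]:
  "minkowski_sum_list (T # Ts) = minkowski_sum T (minkowski_sum_list Ts)"
  unfolding minkowski_sum_list_def by simp

text \<open>The cone \<open>C\<close> need not be convex, so it is not closed under addition itself.\<close>
inductive_set finite_sums :: "'a::real_vector set \<Rightarrow> 'a set" for C where
  zero [intro]: "0 \<in> finite_sums C"
| add [intro]: "c \<in> C \<Longrightarrow> d \<in> finite_sums C \<Longrightarrow> c + d \<in> finite_sums C"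

lemma finite_sums_single: "c \<in> C \<Longrightarrow> c \<in> finite_sums C"
  using finite_sums.add[of c C 0] by auto

lemma finite_sums_add_closed:
  "d \<in> finite_sums C \<Longrightarrow> e \<in> finite_sums C \<Longrightarrow> d + e \<in> finite_sums C"
  by (induction d rule: finite_sums.induct) (auto simp: add.assoc)

lemma finite_sums_scaleR:
  assumes "is_cone C" "t \<ge> 0" "d \<in> finite_sums C"
  shows "t *\<^sub>R d \<in> finite_sums C"
proof (cases "t = 0")
  case False
  with assms(2) have "t > 0" by simp
  then have scale_C: "t *\<^sub>R c \<in> C" if "c \<in> C" for c
    using assms(1) that unfolding is_cone_def by blast
  show ?thesis
    using assms(3) by (induction d rule: finite_sums.induct) (auto simp: scaleR_add_right scale_C)
qed auto

lemma finite_sums_uminus: "d \<in> finite_sums (uminus ` C) \<Longrightarrow> - d \<in> finite_sums C"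
proof (induction d rule: finite_sums.induct)
  case (add c d)
  then obtain x where "x \<in> C" "c = - x" by blast
  with add.IH have "x + - d \<in> finite_sums C" by blast
  then show ?case using \<open>c = - x\<close> by simp
qed (simp add: finite_sums.zero)

lemma upward_add_finite_sums:
  assumes "upward C X" "d \<in> finite_sums C"
  shows "x \<in> X \<Longrightarrow> x + d \<in> X"
  using assms(2)
proof (induction d arbitrary: x rule: finite_sums.induct)
  case (add c d)
  then have "x + c \<in> minkowski_sum X C" unfolding mem_minkowski_sum by blast
  then have "x + c \<in> X" using assms(1) unfolding upward_def by blast
  then show ?case using add.IH[of "x + c"] by (simp add: add.assoc)
qed simp

lemma is_cone_uminus: "is_cone C \<Longrightarrow> is_cone (uminus ` C)"
  unfolding is_cone_def by (auto intro!: image_eqI[of _ uminus])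

lemma antichain_convex_uminus: "antichain_convex (uminus ` C) T = antichain_convex C T"
proof -
  have "uminus ` C \<union> uminus ` uminus ` C = C \<union> uminus ` C" by (auto simp: image_image)
  then show ?thesis unfolding antichain_convex_def by simp
qed

lemma decomp_antichain_convex_uminus:
  "decomp_antichain_convex (uminus ` C) S = decomp_antichain_convex C S"
  unfolding decomp_antichain_convex_def antichain_convex_uminus ..

lemma downward_eq_upward_uminus: "downward C S = upward (uminus ` C) S"
  unfolding downward_def upward_def ..

lemma antichain_convex_combination:
  assumes "is_cone C" "antichain_convex C T" "a \<in> T" "b \<in> T" "0 \<le> l" "l \<le> 1"
  shows "\<exists>z\<in>T. \<exists>d\<in>finite_sums C. l *\<^sub>R a + (1 - l) *\<^sub>R b = z + d"
proof -
  have "a - b \<in> C" if "b - a \<in> uminus ` C"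
    using that by (metis imageE minus_diff_eq minus_minus)
  then consider "b - a \<in> C" | "a - b \<in> C" | "b - a \<notin> C \<union> uminus ` C"
    by blast
  then show ?thesis
  proof cases
    case 1
    then have "(1 - l) *\<^sub>R (b - a) \<in> finite_sums C"
      using assms(1,6) by (intro finite_sums_scaleR finite_sums_single) auto
    moreover have "l *\<^sub>R a + (1 - l) *\<^sub>R b = a + (1 - l) *\<^sub>R (b - a)" by (simp add: algebra_simps)
    ultimately show ?thesis using assms(3) by blast
  next
    case 2
    then have "l *\<^sub>R (a - b) \<in> finite_sums C"
      using assms(1,5) by (intro finite_sums_scaleR finite_sums_single) auto
    moreover have "l *\<^sub>R a + (1 - l) *\<^sub>R b = b + l *\<^sub>R (a - b)" by (simp add: algebra_simps)
    ultimately show ?thesis using assms(4) by blast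
  next
    case 3
    then have "l *\<^sub>R a + (1 - l) *\<^sub>R b \<in> T"
      using assms(2-6) unfolding antichain_convex_def by blast
    then show ?thesis using finite_sums.zero by (metis add.right_neutral)
  qed
qed

lemma minkowski_sum_list_convex_combination:
  assumes "is_cone C" "\<forall>T\<in>set Ts. antichain_convex C T" "0 \<le> l" "l \<le> 1"
  shows "a \<in> minkowski_sum_list Ts \<Longrightarrow> b \<in> minkowski_sum_list Ts \<Longrightarrow>
    \<exists>z\<in>minkowski_sum_list Ts. \<exists>d\<in>finite_sums C. l *\<^sub>R a + (1 - l) *\<^sub>R b = z + d"
  using assms(2)
proof (induction Ts arbitrary: a b)
  case Nil
  then show ?case by (auto simp: minkowski_sum_list_def)
next
  case (Cons T Ts)
  obtain a1 a2 b1 b2 where "a1 \<in> T" "b1 \<in> T" "a2 \<in> minkowski_sum_list Ts" "b2 \<in> minkowski_sum_list Ts"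
    and ab: "a = a1 + a2" "b = b1 + b2"
    using Cons.prems(1,2) by (auto simp: mem_minkowski_sum)
  obtain z1 d1 where "z1 \<in> T" "d1 \<in> finite_sums C" "l *\<^sub>R a1 + (1 - l) *\<^sub>R b1 = z1 + d1"
    using antichain_convex_combination[OF assms(1) _ \<open>a1 \<in> T\<close> \<open>b1 \<in> T\<close> assms(3,4)] Cons.prems(3)
    by auto
  moreover obtain z2 d2 where "z2 \<in> minkowski_sum_list Ts" "d2 \<in> finite_sums C"
    "l *\<^sub>R a2 + (1 - l) *\<^sub>R b2 = z2 + d2"
    using Cons.IH[OF \<open>a2 \<in> _\<close> \<open>b2 \<in> _\<close>] Cons.prems(3) by auto
  moreover have "l *\<^sub>R a + (1 - l) *\<^sub>R b
      = (l *\<^sub>R a1 + (1 - l) *\<^sub>R b1) + (l *\<^sub>R a2 + (1 - l) *\<^sub>R b2)"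
    unfolding ab by (simp add: algebra_simps)
  ultimately have "l *\<^sub>R a + (1 - l) *\<^sub>R b = (z1 + z2) + (d1 + d2)"
    and "z1 + z2 \<in> minkowski_sum_list (T # Ts)" and "d1 + d2 \<in> finite_sums C"
    by (simp_all add: algebra_simps finite_sums_add_closed) (auto simp: mem_minkowski_sum)
  then show ?case by blast
qed

lemma convex_minkowski_sum_finite_sums:
  assumes "is_cone C" "decomp_antichain_convex C S"
  shows "convex (minkowski_sum S (finite_sums C))"
proof (rule convexI)
  obtain Ts where Ts: "\<forall>T\<in>set Ts. antichain_convex C T" "S = minkowski_sum_list Ts"
    using assms(2) unfolding decomp_antichain_convex_def by blast
  fix x y and u v :: real
  assume "x \<in> minkowski_sum S (finite_sums C)" "y \<in> minkowski_sum S (finite_sums C)"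
    and uv: "0 \<le> u" "0 \<le> v" "u + v = 1"
  then have v: "v = 1 - u" by simp
  from \<open>x \<in> _\<close> \<open>y \<in> _\<close> obtain a b d1 d2 where "a \<in> S" "b \<in> S" "d1 \<in> finite_sums C" "d2 \<in> finite_sums C"
    and xy: "x = a + d1" "y = b + d2"
    by (auto simp: mem_minkowski_sum)
  then obtain z d where "z \<in> S" "d \<in> finite_sums C" and zd: "u *\<^sub>R a + v *\<^sub>R b = z + d"
    using minkowski_sum_list_convex_combination[OF assms(1) Ts(1), of u a b] Ts(2) uv
    unfolding v by auto
  have "u *\<^sub>R x + v *\<^sub>R y = z + (d + (u *\<^sub>R d1 + v *\<^sub>R d2))"
    unfolding xy using zd by (simp add: algebra_simps)
  moreover have "d + (u *\<^sub>R d1 + v *\<^sub>R d2) \<in> finite_sums C"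
    using \<open>d \<in> finite_sums C\<close> \<open>d1 \<in> finite_sums C\<close> \<open>d2 \<in> finite_sums C\<close> assms(1) uv
    by (intro finite_sums_add_closed finite_sums_scaleR) auto
  ultimately show "u *\<^sub>R x + v *\<^sub>R y \<in> minkowski_sum S (finite_sums C)"
    using \<open>z \<in> S\<close> by (auto simp: mem_minkowski_sum)
qed

lemma convex_if_upward:
  assumes "is_cone C" "decomp_antichain_convex C X" "upward C X"
  shows "convex X"
proof -
  have "minkowski_sum X (finite_sums C) \<subseteq> X"
    using upward_add_finite_sums[OF assms(3)] by (auto simp: mem_minkowski_sum)
  moreover have "X \<subseteq> minkowski_sum X (finite_sums C)"
    unfolding mem_minkowski_sum subset_iff by (metis add.right_neutral finite_sums.zero)
  ultimately have "minkowski_sum X (finite_sums C) = X" by blast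
  then show ?thesis using convex_minkowski_sum_finite_sums[OF assms(1,2)] by simp
qed

lemma convex_hull_disjoint_if_upward:
  assumes "is_cone C" "decomp_antichain_convex C Y" "upward C X" "X \<inter> Y = {}"
  shows "X \<inter> convex hull Y = {}"
proof -
  define Z where "Z = minkowski_sum Y (finite_sums (uminus ` C))"
  have "convex Z"
    unfolding Z_def using assms(1,2)
    by (intro convex_minkowski_sum_finite_sums) (auto simp: is_cone_uminus decomp_antichain_convex_uminus)
  moreover have "Y \<subseteq> Z"
    unfolding Z_def mem_minkowski_sum subset_iff by (metis add.right_neutral finite_sums.zero)
  ultimately have "convex hull Y \<subseteq> Z" by (simp add: hull_minimal)
  moreover have "X \<inter> Z = {}"
  proof (safe)
    fix x assume "x \<in> X" "x \<in> Z"
    then obtain y d where "y \<in> Y" "d \<in> finite_sums (uminus ` C)" "x = y + d"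
      unfolding Z_def mem_minkowski_sum by blast
    then have "y \<in> X"
      using upward_add_finite_sums[OF assms(3) finite_sums_uminus[OF \<open>d \<in> _\<close>] \<open>x \<in> X\<close>]
        \<open>x = y + d\<close> by simp
    with \<open>y \<in> Y\<close> show "x \<in> {}" using assms(4) by blast
  qed
  ultimately show ?thesis by blast
qed

section \<open>Separation in locally convex spaces\<close>

lemma continuous_on_affine_lctvs:
  "continuous_on UNIV (\<lambda>y::'a::locally_convex_tvs. c *\<^sub>R y + a)"
proof -
  have "((\<lambda>y. c *\<^sub>R y + a) \<longlongrightarrow> c *\<^sub>R x + a) (nhds x)" for x
  proof -
    have "((\<lambda>y. c *\<^sub>R y) \<longlongrightarrow> c *\<^sub>R x) (nhds x)"
      using filterlim_compose[OF continuous_scale_lctvs[of c x, folded nhds_prod]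
          tendsto_Pair[OF tendsto_const filterlim_ident]]
      by simp
    then show ?thesis
      using filterlim_compose[OF continuous_add_lctvs[of "c *\<^sub>R x" a, folded nhds_prod]
          tendsto_Pair[OF _ tendsto_const]]
      by simp
  qed
  then show ?thesis
    unfolding continuous_on_def at_within_def using tendsto_mono[OF inf_le1] by blast
qed

lemma open_vimage_affine_lctvs:
  fixes U :: "'a::locally_convex_tvs set"
  assumes "open U"
  shows "open ((\<lambda>y. c *\<^sub>R (y - a)) -` U)"
proof -
  have "(\<lambda>y. c *\<^sub>R (y - a)) = (\<lambda>y. c *\<^sub>R y + (- c *\<^sub>R a))"
    by (simp add: fun_eq_iff algebra_simps)
  then show ?thesis using open_vimage[OF assms continuous_on_affine_lctvs] by metis
qed

lemma lctvs_absorbing: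
  fixes U :: "'a::locally_convex_tvs set"
  assumes "open U" "0 \<in> U"
  shows "\<exists>e>0. e *\<^sub>R x \<in> U"
proof -
  have "((\<lambda>t. t *\<^sub>R x) \<longlongrightarrow> 0 *\<^sub>R x) (nhds 0)"
    using filterlim_compose[OF continuous_scale_lctvs[of 0 x, folded nhds_prod]
        tendsto_Pair[OF filterlim_ident tendsto_const]]
    by simp
  then have "eventually (\<lambda>t. t *\<^sub>R x \<in> U) (nhds (0::real))"
    using assms unfolding tendsto_def by simp
  then obtain e where "e > 0" "\<And>t. dist t 0 < e \<Longrightarrow> t *\<^sub>R x \<in> U"
    unfolding eventually_nhds_metric by blast
  then show ?thesis by (intro exI[of _ "e / 2"]) simp
qed

lemma lctvs_sum_nhds:
  fixes x y :: "'a::locally_convex_tvs"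
  assumes "open U" "x + y \<in> U"
  obtains A B where "open A" "open B" "x \<in> A" "y \<in> B" "\<And>a b. a \<in> A \<Longrightarrow> b \<in> B \<Longrightarrow> a + b \<in> U"
proof -
  have "eventually (\<lambda>p. fst p + snd p \<in> U) (nhds x \<times>\<^sub>F nhds y)"
    using continuous_add_lctvs[of x y] assms unfolding tendsto_def by blast
  then obtain P Q where "eventually P (nhds x)" "eventually Q (nhds y)"
    and PQ: "\<And>a b. P a \<Longrightarrow> Q b \<Longrightarrow> a + b \<in> U"
    unfolding eventually_prod_filter by auto
  then obtain A B where "open A" "x \<in> A" "\<forall>a\<in>A. P a" "open B" "y \<in> B" "\<forall>b\<in>B. Q b"
    unfolding eventually_nhds by meson
  then show ?thesis by (intro that[of A B]) (auto intro: PQ)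
qed

lemma lctvs_convex_open_nbhd:
  fixes U :: "'a::locally_convex_tvs set"
  assumes "open U" "0 \<in> U"
  obtains W where "open W" "convex W" "0 \<in> W" "W \<subseteq> U"
proof -
  obtain W where W: "open W" "0 \<in> W" "W \<subseteq> U"
    and "\<forall>x\<in>W. \<forall>y\<in>W. \<forall>u::real. \<forall>v. 0 \<le> u \<longrightarrow> 0 \<le> v \<longrightarrow> u + v = 1 \<longrightarrow> u *\<^sub>R x + v *\<^sub>R y \<in> W"
    using locally_convex_lctvs[OF assms] by blast
  then have "convex W" unfolding convex_def by blast
  with W show ?thesis using that by blast
qed

lemma lctvs_continuous_on_linear:
  fixes f :: "'a::locally_convex_tvs \<Rightarrow> real"
  assumes "linear f" "open U" "0 \<in> U" "\<And>u. u \<in> U \<Longrightarrow> f u \<le> 1"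
  shows "continuous_on UNIV f"
proof -
  have "(f \<longlongrightarrow> f z) (nhds z)" for z
  proof (rule tendstoI)
    fix \<epsilon> :: real assume "\<epsilon> > 0"
    let ?g = "\<lambda>c y. c *\<^sub>R (y - z)"
    let ?N = "?g (2 / \<epsilon>) -` U \<inter> ?g (- 2 / \<epsilon>) -` U"
    have "open ?N" by (intro open_Int open_vimage_affine_lctvs assms(2))
    moreover have "z \<in> ?N" using assms(3) by simp
    ultimately have "eventually (\<lambda>y. ?g (2 / \<epsilon>) y \<in> U \<and> ?g (- 2 / \<epsilon>) y \<in> U) (nhds z)"
      unfolding eventually_nhds by blast
    then show "eventually (\<lambda>y. dist (f y) (f z) < \<epsilon>) (nhds z)"
    proof (rule eventually_mono)
      fix y assume "?g (2 / \<epsilon>) y \<in> U \<and> ?g (- 2 / \<epsilon>) y \<in> U"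
      then have "f (?g (2 / \<epsilon>) y) \<le> 1" "f (?g (- 2 / \<epsilon>) y) \<le> 1" using assms(4) by auto
      moreover have linear_g: "f (?g c y) = c * (f y - f z)" for c
        using assms(1) by (simp add: linear_diff linear_scale algebra_simps)
      ultimately have "2 / \<epsilon> * (f y - f z) \<le> 1" "- 2 / \<epsilon> * (f y - f z) \<le> 1"
        by (simp_all only: linear_g)
      then have "2 * (f y - f z) \<le> \<epsilon>" "2 * (f z - f y) \<le> \<epsilon>"
        using \<open>\<epsilon> > 0\<close> by (simp_all add: field_simps)
      then show "dist (f y) (f z) < \<epsilon>"
        using \<open>\<epsilon> > 0\<close> by (simp add: dist_real_def abs_if)
    qed
  qed
  then show ?thesis
    unfolding continuous_on_def at_within_def using tendsto_mono[OF inf_le1] by blast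
qed

lemma lctvs_separating_functional:
  fixes U :: "'a::locally_convex_tvs set"
  assumes "open U" "convex U" "0 \<in> U" "a \<notin> U"
  obtains f :: "'a \<Rightarrow> real"
  where "linear f" "continuous_on UNIV f" "\<And>u. u \<in> U \<Longrightarrow> f u \<le> 1" "1 \<le> f a"
proof -
  have absorbing: "\<exists>e>0. e *\<^sub>R z \<in> U" for z using lctvs_absorbing[OF assms(1,3)] .
  obtain f where f: "linear f" "f \<le> minkowski_functional U" "f a = minkowski_functional U a"
    using Hahn_Banach_sublinear[OF sublinear_minkowski_functional[OF assms(2,3) absorbing]] by blast
  have f_le_1: "f u \<le> 1" if "u \<in> U" for u
    using le_funD[OF f(2), of u] minkowski_functional_le_1[OF that] by linarith
  moreover have "1 \<le> f a"
    using f(3) minkowski_functional_ge_1[OF assms(2,3) absorbing assms(4)] by simp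
  ultimately show ?thesis
    using that[OF f(1) lctvs_continuous_on_linear[OF f(1) assms(1,3) f_le_1]] by blast
qed

lemma lctvs_compact_plus_nbhd_disjoint:
  fixes K X :: "'a::locally_convex_tvs set"
  assumes "compact K" "closed X" "X \<inter> K = {}"
  obtains W where "open W" "convex W" "0 \<in> W" "\<And>k w. k \<in> K \<Longrightarrow> w \<in> W \<Longrightarrow> k + w \<notin> X"
proof -
  have "\<exists>A B. open A \<and> open B \<and> k \<in> A \<and> 0 \<in> B \<and> (\<forall>a\<in>A. \<forall>b\<in>B. a + b \<notin> X)" if "k \<in> K" for k
  proof -
    have "k + 0 \<in> - X" using that assms(3) by auto
    then obtain A B where "open A" "open B" "k \<in> A" "0 \<in> B" "\<And>a b. a \<in> A \<Longrightarrow> b \<in> B \<Longrightarrow> a + b \<in> - X"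
      using lctvs_sum_nhds[of "- X" k 0] assms(2) by (metis open_Compl)
    then show ?thesis by blast
  qed
  then obtain A B where AB: "\<And>k. k \<in> K \<Longrightarrow> open (A k) \<and> open (B k) \<and> k \<in> A k \<and> 0 \<in> B k \<and>
      (\<forall>a\<in>A k. \<forall>b\<in>B k. a + b \<notin> X)"
    by metis
  obtain K' where K': "K' \<subseteq> K" "finite K'" "K \<subseteq> (\<Union>k\<in>K'. A k)"
    using compactE_image[OF assms(1), of K A] AB by blast
  have "open (\<Inter>k\<in>K'. B k)" "0 \<in> (\<Inter>k\<in>K'. B k)" using K' AB by auto
  then obtain W where W: "open W" "convex W" "0 \<in> W" "W \<subseteq> (\<Inter>k\<in>K'. B k)"
    by (rule lctvs_convex_open_nbhd)
  have "k + w \<notin> X" if "k \<in> K" "w \<in> W" for k w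
  proof -
    obtain k' where "k' \<in> K'" "k \<in> A k'" using K'(3) \<open>k \<in> K\<close> by blast
    moreover have "w \<in> B k'" using W(4) \<open>w \<in> W\<close> \<open>k' \<in> K'\<close> by blast
    ultimately show ?thesis using AB K'(1) by blast
  qed
  with W show ?thesis using that by blast
qed

lemma convex_translated_differences:
  assumes "convex X" "convex K" "convex W"
  shows "convex {a + x - k - w | x k w. x \<in> X \<and> k \<in> K \<and> w \<in> W}"
proof (rule convexI)
  fix z1 z2 and u v :: real
  assume "z1 \<in> {a + x - k - w | x k w. x \<in> X \<and> k \<in> K \<and> w \<in> W}"
    and "z2 \<in> {a + x - k - w | x k w. x \<in> X \<and> k \<in> K \<and> w \<in> W}"
    and uv: "0 \<le> u" "0 \<le> v" "u + v = 1"
  then obtain x1 k1 w1 x2 k2 w2 where 1: "x1 \<in> X" "k1 \<in> K" "w1 \<in> W" "z1 = a + x1 - k1 - w1"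
    and 2: "x2 \<in> X" "k2 \<in> K" "w2 \<in> W" "z2 = a + x2 - k2 - w2"
    by blast
  have "u *\<^sub>R z1 + v *\<^sub>R z2
      = (u + v) *\<^sub>R a + (u *\<^sub>R x1 + v *\<^sub>R x2) - (u *\<^sub>R k1 + v *\<^sub>R k2) - (u *\<^sub>R w1 + v *\<^sub>R w2)"
    unfolding 1(4) 2(4) by (simp add: algebra_simps)
  then have "u *\<^sub>R z1 + v *\<^sub>R z2
      = a + (u *\<^sub>R x1 + v *\<^sub>R x2) - (u *\<^sub>R k1 + v *\<^sub>R k2) - (u *\<^sub>R w1 + v *\<^sub>R w2)"
    using uv(3) by simp
  moreover have "u *\<^sub>R x1 + v *\<^sub>R x2 \<in> X" "u *\<^sub>R k1 + v *\<^sub>R k2 \<in> K" "u *\<^sub>R w1 + v *\<^sub>R w2 \<in> W"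
    using convexD[OF assms(1) 1(1) 2(1) uv] convexD[OF assms(2) 1(2) 2(2) uv]
      convexD[OF assms(3) 1(3) 2(3) uv] by auto
  ultimately show "u *\<^sub>R z1 + v *\<^sub>R z2 \<in> {a + x - k - w | x k w. x \<in> X \<and> k \<in> K \<and> w \<in> W}"
    by blast
qed

lemma open_translated_differences_lctvs:
  fixes W :: "'a::locally_convex_tvs set"
  assumes "open W"
  shows "open {a + x - k - w | x k w. x \<in> X \<and> k \<in> K \<and> w \<in> W}"
proof -
  have "{a + x - k - w | x k w. x \<in> X \<and> k \<in> K \<and> w \<in> W}
      = (\<Union>x\<in>X. \<Union>k\<in>K. (\<lambda>y. (- 1) *\<^sub>R (y - (a + x - k))) -` W)"
  proof (intro equalityI subsetI)
    fix y assume "y \<in> {a + x - k - w | x k w. x \<in> X \<and> k \<in> K \<and> w \<in> W}"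
    then obtain x k w where "x \<in> X" "k \<in> K" "w \<in> W" "y = a + x - k - w" by blast
    moreover have "(- 1) *\<^sub>R (y - (a + x - k)) = w" using \<open>y = a + x - k - w\<close> by simp
    ultimately show "y \<in> (\<Union>x\<in>X. \<Union>k\<in>K. (\<lambda>y. (- 1) *\<^sub>R (y - (a + x - k))) -` W)"
      by blast
  next
    fix y assume "y \<in> (\<Union>x\<in>X. \<Union>k\<in>K. (\<lambda>y. (- 1) *\<^sub>R (y - (a + x - k))) -` W)"
    then obtain x k where "x \<in> X" "k \<in> K" "(- 1) *\<^sub>R (y - (a + x - k)) \<in> W" by blast
    moreover have "y = a + x - k - (- 1) *\<^sub>R (y - (a + x - k))" by simp
    ultimately show "y \<in> {a + x - k - w | x k w. x \<in> X \<and> k \<in> K \<and> w \<in> W}" by blast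
  qed
  then show ?thesis by (simp only:) (intro open_UN ballI open_vimage_affine_lctvs assms)
qed

lemma lctvs_strict_separation:
  fixes X K :: "'a::locally_convex_tvs set"
  assumes "closed X" "convex X" "compact K" "convex K" "X \<inter> K = {}"
  obtains f :: "'a \<Rightarrow> real" and \<delta>
  where "linear f" "continuous_on UNIV f" "\<delta> > 0" "\<And>x k. x \<in> X \<Longrightarrow> k \<in> K \<Longrightarrow> f x + \<delta> \<le> f k"
proof (cases "X = {} \<or> K = {}")
  case True
  then show ?thesis using that[of "\<lambda>_. 0" 1] by (auto simp: linear_zero)
next
  case False
  then obtain x0 k0 where "x0 \<in> X" "k0 \<in> K" by blast
  obtain W where W: "open W" "convex W" "0 \<in> W" "\<And>k w. k \<in> K \<Longrightarrow> w \<in> W \<Longrightarrow> k + w \<notin> X"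
    using lctvs_compact_plus_nbhd_disjoint[OF assms(3,1,5)] by blast
  define a where "a = k0 - x0"
  define U where "U = {a + x - k - w | x k w. x \<in> X \<and> k \<in> K \<and> w \<in> W}"
  have "0 \<in> U"
    unfolding U_def a_def using \<open>x0 \<in> X\<close> \<open>k0 \<in> K\<close> W(3) by force
  have "a \<notin> U"
  proof
    assume "a \<in> U"
    then obtain x k w where "x \<in> X" "k \<in> K" "w \<in> W" "a = a + x - k - w" unfolding U_def by blast
    then have "k + w \<in> X" by (simp add: algebra_simps)
    with W(4) \<open>k \<in> K\<close> \<open>w \<in> W\<close> show False by blast
  qed
  have "convex U" unfolding U_def using assms(2,4) W(2) by (rule convex_translated_differences)
  have "open U" unfolding U_def using W(1) by (rule open_translated_differences_lctvs)
  obtain f :: "'a \<Rightarrow> real" where f: "linear f" "continuous_on UNIV f" "\<And>u. u \<in> U \<Longrightarrow> f u \<le> 1" "1 \<le> f a"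
    using lctvs_separating_functional[OF \<open>open U\<close> \<open>convex U\<close> \<open>0 \<in> U\<close> \<open>a \<notin> U\<close>] by blast
  have f_gap: "f x \<le> f k + f w" if "x \<in> X" "k \<in> K" "w \<in> W" for x k w
  proof -
    have "f (a + x - k - w) \<le> 1" using that f(3) unfolding U_def by blast
    then have "f a + f x - f k - f w \<le> 1" using f(1) by (simp add: linear_add linear_diff)
    then show ?thesis using f(4) by linarith
  qed
  txt \<open>Since \<open>f a \<ge> 1\<close>, the point \<open>e *\<^sub>R (- a)\<close> of \<open>W\<close> makes the gap strict.\<close>
  obtain e where "e > 0" "e *\<^sub>R (- a) \<in> W" using lctvs_absorbing[OF W(1,3)] by blast
  have "f x + e * f a \<le> f k" if "x \<in> X" "k \<in> K" for x k
    using f_gap[OF that \<open>e *\<^sub>R (- a) \<in> W\<close>] f(1) by (simp add: linear_neg linear_scale)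
  moreover have "e * f a > 0" using \<open>e > 0\<close> f(4) by simp
  ultimately show ?thesis using that[OF f(1,2)] by blast
qed

lemma strictly_separated_if_gap:
  fixes f :: "'a::{real_vector,topological_space} \<Rightarrow> real"
  assumes "linear f" "continuous_on UNIV f" "\<delta> > 0" "X \<noteq> {}" "Y \<noteq> {}"
    and gap: "\<And>x y. x \<in> X \<Longrightarrow> y \<in> Y \<Longrightarrow> f x + \<delta> \<le> f y"
  shows "strictly_separated X Y"
proof -
  obtain x0 y0 where "x0 \<in> X" "y0 \<in> Y" using assms(4,5) by blast
  define s where "s = (SUP x\<in>X. ereal (f x))"
  have s_le: "s \<le> ereal (f y - \<delta>)" if "y \<in> Y" for y
    unfolding s_def using gap[OF _ that] by (intro SUP_least) (simp add: algebra_simps)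
  moreover have "ereal (f x0) \<le> s" unfolding s_def using \<open>x0 \<in> X\<close> by (rule SUP_upper)
  ultimately obtain r where r: "s = ereal r" using \<open>y0 \<in> Y\<close> by (cases s) auto
  have "s < ereal (r + \<delta>)" using r assms(3) by simp
  also have "ereal (r + \<delta>) \<le> (INF y\<in>Y. ereal (f y))"
    using s_le r by (intro INF_greatest) (simp add: algebra_simps)
  finally show ?thesis unfolding strictly_separated_def s_def using assms(1,2) by blast
qed

lemma strictly_separated_if_upward:
  fixes C X Y :: "'a::locally_convex_tvs set"
  assumes "is_cone C" "X \<noteq> {}" "Y \<noteq> {}"
    and "decomp_antichain_convex C X" "decomp_antichain_convex C Y"
    and "closed X" "compact (convex hull Y)" "X \<inter> Y = {}" "upward C X"
  shows "strictly_separated X Y"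
proof -
  obtain f :: "'a \<Rightarrow> real" and \<delta> where "linear f" "continuous_on UNIV f" "\<delta> > 0"
    and gap: "\<And>x k. x \<in> X \<Longrightarrow> k \<in> convex hull Y \<Longrightarrow> f x + \<delta> \<le> f k"
    using lctvs_strict_separation[OF assms(6) convex_if_upward[OF assms(1,4,9)] assms(7)
        convex_convex_hull convex_hull_disjoint_if_upward[OF assms(1,5,9,8)]] by blast
  then show ?thesis
    using hull_subset[of Y convex] assms(2,3) by (intro strictly_separated_if_gap[of f \<delta>]) auto
qed

theorem theorem9:
  fixes C X Y :: "'a::locally_convex_tvs set"
  assumes "is_cone C"
    and "X \<noteq> {}" and "Y \<noteq> {}"
    and "decomp_antichain_convex C X" and "decomp_antichain_convex C Y"
    and "closed X" and "compact (convex hull Y)" and "X \<inter> Y = {}"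
  shows "(upward C X \<longrightarrow> strictly_separated X Y) \<and>
         (downward C X \<longrightarrow> strictly_separated X Y)"
proof (intro conjI impI)
  assume "upward C X"
  then show "strictly_separated X Y" by (rule strictly_separated_if_upward[OF assms])
next
  assume "downward C X"
  then have "upward (uminus ` C) X" by (simp add: downward_eq_upward_uminus)
  then show "strictly_separated X Y"
    using strictly_separated_if_upward[OF is_cone_uminus[OF assms(1)] assms(2,3)] assms(4-8)
    by (simp add: decomp_antichain_convex_uminus)
qed

end
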